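(* Assume the standing hypotheses and let $\sigma\in(0,1)$. For $(x,\lambda)\in\mathcal B((x^*,\lambda^* ),\delta)$ with $x>0,\lambda>0$, let $(\Delta x^N,\Delta\lambda^N)$ be the Newton direction for $\mu^+=\sigma\mu$, and define for $i=1,\dots,n$ $$\Delta x_i^C=-x_i+\frac{\mu^+}{\lambda_i},\qquad \Delta\lambda_i^C=-\lambda_i+\frac{\mu^+}{x_i}.$$ Then for all $i$, $\Delta x_i^C-\Delta x_i^N=\frac{x_i}{\lambda_i}\Delta\lambda_i^N$ and $\Delta\lambda_i^C-\Delta\lambda_i^N=\frac{\lambda_i}{x_i}\Delta x_i^N$. Moreover, for every $C_1>0$ there exist $\rho>0$, $\bar\mu\in(0,\hat\mu]$ and $C>0$ such that for all $\mu\in(0,\bar\mu]$ and all $(x,\lambda)\in\mathcal B((x^*,\lambda^* ),\delta)$ with $x>0,\lambda>0$, $\|(x,\lambda)-(x^\mu,\lambda^\mu)\|<\rho$, $\|F_\mu(x,\lambda)\|\le C_1\mu$: $$|\Delta x_i^C-\Delta x_i^N|\le C\mu^2\ (i\in\mathcal A),\qquad |\Delta\lambda_i^C-\Delta\lambda_i^N|\le C\mu^2\ (i\in\mathcal I).$$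
   Context: Problem: minimize $f(x)$ subject to $x\ge0$, $f:\mathbb R^n\to\mathbb R$ twice continuously differentiable with locally Lipschitz Hessian. Norms Euclidean; $e$ all-ones; $X=\mathrm{diag}(x)$, $\Lambda=\mathrm{diag}(\lambda)$; $F_\mu(x,\lambda)=\begin{bmatrix}\nabla f(x)-\lambda\\ \Lambda Xe-\mu e\end{bmatrix}$, $F'(x,\lambda)=\begin{bmatrix}\nabla^2f(x)&-I\\ \Lambda&X\end{bmatrix}$. The Newton direction for $\mu^+=\sigma\mu$ solves $F'(x,\lambda)(\Delta x^N,\Delta\lambda^N)=-F_{\mu^+}(x,\lambda)$. Standing hypotheses: $(x^*,\lambda^* )$ satisfies $\nabla f(x^* )=\lambda^*$, $x^*\ge0$, $\lambda^*\ge0$, $x_i^*\lambda_i^*=0$, $x^*+\lambda^*>0$, $[\nabla^2f(x^* )]_{\mathcal I\mathcal I}\succ0$, where $\mathcal A=\{i:x^*_i=0\}$, $\mathcal I=\{i:x_i^*>0\}$. $\delta>0$: $F'$ nonsingular on $\mathcal B((x^*,\lambda^* ),\delta)$ with $\|F'^{-1}\|\le M$; $\hat\mu>0$: for $\mu\in(0,\hat\mu]$ a Lipschitz barrier trajectory $(x^\mu,\lambda^\mu)\in\mathcal B((x^*,\lambda^* ),\delta)$ with $F_\mu(x^\mu,\lambda^\mu)=0$, $\|(x^\mu,\lambda^\mu)-(x^*,\lambda^* )\|\le C_4\mu$ exists. *)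

theory Defs
  imports "HOL-Analysis.Analysis"
begin

text \<open>Vectors in R^n are modelled as real^'n; a primal-dual pair (x,lambda) is an element
of (real^'n) \<times> (real^'n), whose product norm is exactly the Euclidean norm of the stacked vector.
g is the gradient of f and H its Hessian (see the hypotheses of the theorem).\<close>

definition Fmu :: "(real^'n \<Rightarrow> real^'n) \<Rightarrow> real \<Rightarrow> real^'n \<Rightarrow> real^'n \<Rightarrow> (real^'n) \<times> (real^'n)" where
  "Fmu g \<mu> x l = (g x - l, (\<chi> i. l$i * x$i - \<mu>))"

definition Fprime :: "(real^'n \<Rightarrow> real^'n^'n) \<Rightarrow> real^'n \<Rightarrow> real^'n
    \<Rightarrow> (real^'n) \<times> (real^'n) \<Rightarrow> (real^'n) \<times> (real^'n)" where
  "Fprime H x l d = (H x *v fst d - snd d, (\<chi> i. l$i * (fst d)$i + x$i * (snd d)$i))"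

definition dxC :: "real \<Rightarrow> real^'n \<Rightarrow> real^'n \<Rightarrow> real^'n" where
  "dxC \<mu>p x l = (\<chi> i. - x$i + \<mu>p / l$i)"

definition dlC :: "real \<Rightarrow> real^'n \<Rightarrow> real^'n \<Rightarrow> real^'n" where
  "dlC \<mu>p x l = (\<chi> i. - l$i + \<mu>p / x$i)"

end

theory Submission
  imports Defs
begin

text \<open>The first claim is the second block row of the Newton system, divided by \<open>\<lambda>\<^sub>i\<close> resp. \<open>x\<^sub>i\<close>.
For the estimate, \<open>x\<^sub>i \<lambda>\<^sub>i = O(\<mu>)\<close> because the complementarity residual is \<open>O(\<mu>)\<close>, the Newton step
is \<open>O(\<mu>)\<close> because \<open>F'\<close> has a uniformly bounded inverse and the right-hand side is \<open>O(\<mu>)\<close>, and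
near the barrier trajectory strict complementarity keeps \<open>\<lambda>\<^sub>i\<close> (for \<open>i \<in> \<A>\<close>) resp. \<open>x\<^sub>i\<close>
(for \<open>i \<in> \<I>\<close>) bounded away from zero. Hence \<open>(x\<^sub>i/\<lambda>\<^sub>i) \<Delta>\<lambda>\<^sub>i\<^sup>N\<close> and \<open>(\<lambda>\<^sub>i/x\<^sub>i) \<Delta>x\<^sub>i\<^sup>N\<close>
are \<open>O(\<mu>) \<cdot> O(\<mu>)\<close> on these index sets.\<close>

lemma linear_Fprime: "linear (Fprime H x l)"
  unfolding Fprime_def
  by (intro linearI) (auto simp: vec_eq_iff matrix_vector_right_distrib algebra_simps)

lemma norm_le_onorm_inv:
  fixes F :: "'a::euclidean_space \<Rightarrow> 'a"
  assumes "linear F" "bij F" "F d = y"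
  shows "norm d \<le> onorm (inv F) * norm y"
proof -
  have "bounded_linear (inv F)"
    using assms(1,2) by (metis bij_is_inj inj_linear_imp_inv_linear linear_linear)
  moreover have "d = inv F y"
    using assms(2,3) by (metis bij_is_inj inv_f_f)
  ultimately show ?thesis
    using onorm by blast
qed

lemma abs_fst_component_le_norm: "\<bar>fst p $ i\<bar> \<le> norm p"
  for p :: "(real^'n) \<times> 'b::real_normed_vector"
  by (metis component_le_norm_cart norm_fst_le order_trans prod.collapse)

lemma abs_snd_component_le_norm: "\<bar>snd p $ i\<bar> \<le> norm p"
  for p :: "'b::real_normed_vector \<times> (real^'n)"
  by (metis component_le_norm_cart norm_snd_le order_trans prod.collapse)

lemma newton_corrector_difference:
  assumes newton: "Fprime H x l dN = - Fmu g \<nu> x l" and "x$i \<noteq> 0" "l$i \<noteq> 0"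
  shows "dxC \<nu> x l $ i - fst dN $ i = x$i / l$i * snd dN $ i"
    and "dlC \<nu> x l $ i - snd dN $ i = l$i / x$i * fst dN $ i"
proof -
  have "snd (Fprime H x l dN) $ i = snd (- Fmu g \<nu> x l) $ i"
    using newton by simp
  then have "l$i * fst dN $ i + x$i * snd dN $ i = \<nu> - l$i * x$i"
    by (simp add: Fprime_def Fmu_def)
  with assms(2,3) show "dxC \<nu> x l $ i - fst dN $ i = x$i / l$i * snd dN $ i"
    and "dlC \<nu> x l $ i - snd dN $ i = l$i / x$i * fst dN $ i"
    by (simp_all add: dxC_def dlC_def field_simps)
qed

lemma complementarity_le_norm_Fmu: "x$i * l$i \<le> \<mu> + norm (Fmu g \<mu> x l)"
proof -
  have "\<bar>l$i * x$i - \<mu>\<bar> \<le> norm (Fmu g \<mu> x l)"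
    using abs_snd_component_le_norm[of "Fmu g \<mu> x l" i] by (simp add: Fmu_def)
  then show ?thesis
    by (simp add: algebra_simps abs_le_iff)
qed

lemma norm_Fmu_change_mu:
  fixes x l :: "real^'n"
  shows "norm (Fmu g \<nu> x l) \<le> norm (Fmu g \<mu> x l) + \<bar>\<mu> - \<nu>\<bar> * norm (\<chi> (i::'n). (1::real))"
proof -
  have "Fmu g \<nu> x l = Fmu g \<mu> x l + (0, (\<mu> - \<nu>) *\<^sub>R (\<chi> (i::'n). (1::real)))"
    by (simp add: Fmu_def vec_eq_iff algebra_simps)
  then have "norm (Fmu g \<nu> x l)
      \<le> norm (Fmu g \<mu> x l) + norm ((0::real^'n), (\<mu> - \<nu>) *\<^sub>R (\<chi> (i::'n). (1::real)))"
    by (metis norm_triangle_ineq)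
  then show ?thesis
    by (simp add: norm_Pair)
qed

lemma abs_ratio_mult_le:
  fixes p q c a b d :: real
  assumes "0 \<le> p" "p * q \<le> a" "0 < b" "b \<le> q" "\<bar>c\<bar> \<le> d"
  shows "\<bar>p / q * c\<bar> \<le> a * d / b^2"
proof -
  have "b^2 \<le> q^2"
    using assms(3,4) by (intro power_mono) auto
  moreover have a: "0 \<le> a"
    using assms by (smt (verit) mult_nonneg_nonneg)
  ultimately have "p * q / q^2 \<le> a / b^2"
    using assms by (intro frac_le) auto
  moreover have "p / q = p * q / q^2"
    using assms by (simp add: power2_eq_square)
  ultimately have pq: "p / q \<le> a / b^2"
    by simp
  have "\<bar>p / q * c\<bar> = p / q * \<bar>c\<bar>"
    using assms by (simp add: abs_mult)
  also have "\<dots> \<le> a / b^2 * d"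
    using assms pq a by (intro mult_mono) auto
  finally show ?thesis
    by simp
qed

lemma norm_newton_direction_le:
  fixes x l :: "real^'n"
  assumes "bij (Fprime H x l)" "onorm (inv (Fprime H x l)) \<le> M"
    and newton: "Fprime H x l dN = - Fmu g \<nu> x l"
    and "norm (Fmu g \<mu> x l) \<le> C1 * \<mu>" "\<bar>\<mu> - \<nu>\<bar> \<le> \<mu>"
  shows "norm dN \<le> \<bar>M\<bar> * (C1 + norm (\<chi> (i::'n). (1::real))) * \<mu>"
proof -
  have "norm dN \<le> onorm (inv (Fprime H x l)) * norm (- Fmu g \<nu> x l)"
    using norm_le_onorm_inv[OF linear_Fprime assms(1) newton] .
  also have "\<dots> \<le> \<bar>M\<bar> * norm (Fmu g \<nu> x l)"
    using assms(2) by (simp add: mult_right_mono)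
  also have "\<dots> \<le> \<bar>M\<bar> * ((C1 + norm (\<chi> (i::'n). (1::real))) * \<mu>)"
  proof (intro mult_left_mono)
    have "\<bar>\<mu> - \<nu>\<bar> * norm (\<chi> (i::'n). (1::real)) \<le> \<mu> * norm (\<chi> (i::'n). (1::real))"
      using assms(5) by (intro mult_right_mono) auto
    then show "norm (Fmu g \<nu> x l) \<le> (C1 + norm (\<chi> (i::'n). (1::real))) * \<mu>"
      using norm_Fmu_change_mu[of g \<nu> x l \<mu>] assms(4) by (simp add: algebra_simps)
  qed simp
  finally show ?thesis
    by (simp add: mult.assoc)
qed

lemma newton_corrector_quadratic_bound:
  fixes x l xs ls :: "real^'n"
  assumes near: "norm ((x, l) - (xs, ls)) < 3 * m / 4"
    and "0 < m" "m \<le> xs$i + ls$i" "0 < x$i" "0 < l$i"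
    and residual: "norm (Fmu g \<mu> x l) \<le> C1 * \<mu>"
    and step: "norm dN \<le> D * \<mu>"
    and newton: "Fprime H x l dN = - Fmu g \<nu> x l"
  shows "xs$i = 0 \<Longrightarrow> \<bar>dxC \<nu> x l $ i - fst dN $ i\<bar> \<le> 16 * (1 + C1) * D / m^2 * \<mu>^2"
    and "ls$i = 0 \<Longrightarrow> \<bar>dlC \<nu> x l $ i - snd dN $ i\<bar> \<le> 16 * (1 + C1) * D / m^2 * \<mu>^2"
proof -
  have xl: "x$i * l$i \<le> (1 + C1) * \<mu>"
    using complementarity_le_norm_Fmu[of x i l \<mu> g] residual by (simp add: algebra_simps)
  have bound: "(1 + C1) * \<mu> * (D * \<mu>) / (m / 4)^2 = 16 * (1 + C1) * D / m^2 * \<mu>^2"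
    using \<open>0 < m\<close> by (simp add: field_simps power2_eq_square)
  have "\<bar>x$i - xs$i\<bar> < 3 * m / 4" "\<bar>l$i - ls$i\<bar> < 3 * m / 4"
    using near abs_fst_component_le_norm[of "(x, l) - (xs, ls)" i]
      abs_snd_component_le_norm[of "(x, l) - (xs, ls)" i] by auto
  then have away: "xs$i = 0 \<Longrightarrow> m / 4 \<le> l$i" "ls$i = 0 \<Longrightarrow> m / 4 \<le> x$i"
    using \<open>m \<le> xs$i + ls$i\<close> by linarith+
  have dN: "\<bar>fst dN $ i\<bar> \<le> D * \<mu>" "\<bar>snd dN $ i\<bar> \<le> D * \<mu>"
    using step abs_fst_component_le_norm[of dN i] abs_snd_component_le_norm[of dN i] by auto
  show "\<bar>dxC \<nu> x l $ i - fst dN $ i\<bar> \<le> 16 * (1 + C1) * D / m^2 * \<mu>^2" if "xs$i = 0"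
  proof -
    have "\<bar>x$i / l$i * snd dN $ i\<bar> \<le> (1 + C1) * \<mu> * (D * \<mu>) / (m / 4)^2"
      using assms(2,4) xl away(1)[OF that] dN(2) by (intro abs_ratio_mult_le) auto
    then show ?thesis
      using newton_corrector_difference(1)[OF newton] assms(4,5) bound by simp
  qed
  show "\<bar>dlC \<nu> x l $ i - snd dN $ i\<bar> \<le> 16 * (1 + C1) * D / m^2 * \<mu>^2" if "ls$i = 0"
  proof -
    have "\<bar>l$i / x$i * fst dN $ i\<bar> \<le> (1 + C1) * \<mu> * (D * \<mu>) / (m / 4)^2"
      using assms(2,5) xl away(2)[OF that] dN(1) by (intro abs_ratio_mult_le) (auto simp: mult.commute)
    then show ?thesis
      using newton_corrector_difference(2)[OF newton] assms(4,5) bound by simp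
  qed
qed

lemma newton_corrector_bound_near_central_path:
  fixes x l xs ls xp lp :: "real^'n"
  assumes "0 < m" and gap: "\<And>i. m \<le> xs$i + ls$i" and compl: "\<And>i. xs$i * ls$i = 0"
    and path: "norm ((xp, lp) - (xs, ls)) \<le> m / 4"
    and near: "norm ((x, l) - (xp, lp)) < m / 2"
    and pos: "\<And>i. 0 < x$i" "\<And>i. 0 < l$i"
    and nonsing: "bij (Fprime H x l)" "onorm (inv (Fprime H x l)) \<le> M"
    and residual: "norm (Fmu g \<mu> x l) \<le> C1 * \<mu>" and "\<bar>\<mu> - \<nu>\<bar> \<le> \<mu>"
    and newton: "Fprime H x l dN = - Fmu g \<nu> x l"
    and C: "16 * (1 + C1) * (\<bar>M\<bar> * (C1 + norm (\<chi> (i::'n). (1::real)))) / m^2 \<le> C"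
  shows "(\<forall>i. xs$i = 0 \<longrightarrow> \<bar>dxC \<nu> x l $ i - fst dN $ i\<bar> \<le> C * \<mu>^2)
       \<and> (\<forall>i. xs$i > 0 \<longrightarrow> \<bar>dlC \<nu> x l $ i - snd dN $ i\<bar> \<le> C * \<mu>^2)"
proof -
  have "norm ((x, l) - (xs, ls)) \<le> norm ((x, l) - (xp, lp)) + norm ((xp, lp) - (xs, ls))"
    using norm_triangle_ineq[of "(x, l) - (xp, lp)" "(xp, lp) - (xs, ls)"] by simp
  then have close: "norm ((x, l) - (xs, ls)) < 3 * m / 4"
    using path near by linarith
  have step: "norm dN \<le> \<bar>M\<bar> * (C1 + norm (\<chi> (i::'n). (1::real))) * \<mu>"
    using norm_newton_direction_le[OF nonsing newton residual \<open>\<bar>\<mu> - \<nu>\<bar> \<le> \<mu>\<close>] .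
  have "16 * (1 + C1) * (\<bar>M\<bar> * (C1 + norm (\<chi> (i::'n). (1::real)))) / m^2 * \<mu>^2 \<le> C * \<mu>^2"
    using C by (intro mult_right_mono) auto
  with newton_corrector_quadratic_bound[OF close \<open>0 < m\<close> gap pos residual step newton]
  show ?thesis
    using compl by (smt (verit) mult_eq_0_iff)
qed

lemma norm_central_path_le_quarter:
  fixes z :: "real \<Rightarrow> 'a::real_normed_vector"
  assumes "0 < m" and bound: "\<And>\<mu>. \<mu> \<in> {0<..\<mu>hat} \<Longrightarrow> norm (z \<mu> - zs) \<le> C4 * \<mu>"
    and "0 < \<mu>" "\<mu> \<le> min \<mu>hat (m / (4 * (\<bar>C4\<bar> + 1)))"
  shows "norm (z \<mu> - zs) \<le> m / 4"
proof -
  have "norm (z \<mu> - zs) \<le> C4 * \<mu>"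
    using bound assms(3,4) by simp
  also have "\<dots> \<le> \<bar>C4\<bar> * (m / (4 * (\<bar>C4\<bar> + 1)))"
    using assms(3,4) by (intro mult_mono) auto
  also have "\<dots> \<le> m / 4"
    using \<open>0 < m\<close> by (simp add: field_simps)
  finally show ?thesis .
qed

lemma newton_corrector_estimate:
  fixes xs ls :: "real^'n" and xmu lmu :: "real \<Rightarrow> real^'n"
  assumes "0 < m" and gap: "\<And>i. m \<le> xs$i + ls$i" and compl: "\<And>i. xs$i * ls$i = 0"
    and nonsing: "\<And>x l. (x, l) \<in> ball (xs, ls) \<delta> \<Longrightarrow>
                    bij (Fprime H x l) \<and> onorm (inv (Fprime H x l)) \<le> M"
    and "0 < \<mu>hat"
    and traj_bound: "\<And>\<mu>. \<mu> \<in> {0<..\<mu>hat} \<Longrightarrow> norm ((xmu \<mu>, lmu \<mu>) - (xs, ls)) \<le> C4 * \<mu>"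
    and "0 < \<sigma>" "\<sigma> < 1" "0 < C1"
  shows "\<exists>\<rho>>0. \<exists>\<mu>bar. 0 < \<mu>bar \<and> \<mu>bar \<le> \<mu>hat \<and> (\<exists>C>0.
           \<forall>\<mu>. 0 < \<mu> \<and> \<mu> \<le> \<mu>bar \<longrightarrow>
           (\<forall>x l. (x, l) \<in> ball (xs, ls) \<delta> \<and> (\<forall>i. x$i > 0) \<and> (\<forall>i. l$i > 0)
              \<and> norm ((x, l) - (xmu \<mu>, lmu \<mu>)) < \<rho> \<and> norm (Fmu g \<mu> x l) \<le> C1 * \<mu> \<longrightarrow>
              (\<forall>dN. Fprime H x l dN = - Fmu g (\<sigma> * \<mu>) x l \<longrightarrow>
                 (\<forall>i. xs$i = 0 \<longrightarrow> \<bar>(dxC (\<sigma> * \<mu>) x l)$i - (fst dN)$i\<bar> \<le> C * \<mu>^2) \<and>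
                 (\<forall>i. xs$i > 0 \<longrightarrow> \<bar>(dlC (\<sigma> * \<mu>) x l)$i - (snd dN)$i\<bar> \<le> C * \<mu>^2))))"
proof -
  define \<mu>bar where "\<mu>bar = min \<mu>hat (m / (4 * (\<bar>C4\<bar> + 1)))"
  have \<mu>bar: "0 < \<mu>bar" "\<mu>bar \<le> \<mu>hat"
    using \<open>0 < \<mu>hat\<close> \<open>0 < m\<close> unfolding \<mu>bar_def by auto
  define C where "C = 16 * (1 + C1) * (\<bar>M\<bar> * (C1 + norm (\<chi> (i::'n). (1::real)))) / m^2 + 1"
  have "0 < C"
    unfolding C_def using \<open>0 < C1\<close> by (intro add_nonneg_pos) auto
  have shift: "\<bar>\<mu> - \<sigma> * \<mu>\<bar> \<le> \<mu>" if "0 < \<mu>" for \<mu>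
    using \<open>0 < \<sigma>\<close> \<open>\<sigma> < 1\<close> that by (simp add: abs_le_iff algebra_simps)
  have corrector_bound: "(\<forall>i. xs$i = 0 \<longrightarrow> \<bar>dxC (\<sigma> * \<mu>) x l $ i - fst dN $ i\<bar> \<le> C * \<mu>^2)
     \<and> (\<forall>i. xs$i > 0 \<longrightarrow> \<bar>dlC (\<sigma> * \<mu>) x l $ i - snd dN $ i\<bar> \<le> C * \<mu>^2)"
    if "0 < \<mu>" "\<mu> \<le> \<mu>bar" "(x, l) \<in> ball (xs, ls) \<delta>" "\<forall>i. x$i > 0" "\<forall>i. l$i > 0"
      "norm ((x, l) - (xmu \<mu>, lmu \<mu>)) < m / 2" "norm (Fmu g \<mu> x l) \<le> C1 * \<mu>"
      "Fprime H x l dN = - Fmu g (\<sigma> * \<mu>) x l"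
    for \<mu> x l dN
  proof (rule newton_corrector_bound_near_central_path[OF \<open>0 < m\<close> gap compl _ that(6)])
    show "norm ((xmu \<mu>, lmu \<mu>) - (xs, ls)) \<le> m / 4"
      using norm_central_path_le_quarter[OF \<open>0 < m\<close> traj_bound that(1)] that(2)
      unfolding \<mu>bar_def by blast
    show "\<And>i. 0 < x$i" "\<And>i. 0 < l$i"
      using that(4,5) by auto
  qed (use nonsing[OF that(3)] that(7,8) shift[OF that(1)] in \<open>auto simp: C_def\<close>)
  have "0 < m / 2"
    using \<open>0 < m\<close> by simp
  show ?thesis
    apply (rule exI[of _ "m / 2"], rule conjI, fact)
    apply (rule exI[of _ \<mu>bar], intro conjI, fact, fact)
    apply (rule exI[of _ C], rule conjI, fact)
    by (intro allI impI, elim conjE, rule corrector_bound)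
qed

theorem proposition2:
  fixes f :: "real^'n \<Rightarrow> real"
    and g :: "real^'n \<Rightarrow> real^'n"
    and H :: "real^'n \<Rightarrow> real^'n^'n"
    and xs ls :: "real^'n"
    and \<delta> M \<mu>hat C4 \<sigma> :: real
    and xmu lmu :: "real \<Rightarrow> real^'n"
  assumes grad: "\<And>x. (f has_derivative (\<lambda>h. g x \<bullet> h)) (at x)"
    and hess: "\<And>x. (g has_derivative (\<lambda>h. H x *v h)) (at x)"
    and hess_cont: "continuous_on UNIV H"
    and hess_loclip: "\<And>z. \<exists>r>0. \<exists>L. L-lipschitz_on (ball z r) H"
    and kkt: "g xs = ls"
    and xs_nn: "\<And>i. xs$i \<ge> 0" and ls_nn: "\<And>i. ls$i \<ge> 0"
    and compl: "\<And>i. xs$i * ls$i = 0"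
    and strict: "\<And>i. xs$i + ls$i > 0"
    and pd: "\<And>v. v \<noteq> 0 \<Longrightarrow> (\<forall>i. xs$i = 0 \<longrightarrow> v$i = 0) \<Longrightarrow> v \<bullet> (H xs *v v) > 0"
    and \<delta>_pos: "\<delta> > 0"
    and nonsing: "\<And>x l. (x, l) \<in> ball (xs, ls) \<delta> \<Longrightarrow>
                    bij (Fprime H x l) \<and> onorm (inv (Fprime H x l)) \<le> M"
    and \<mu>hat_pos: "\<mu>hat > 0"
    and traj_ball: "\<And>\<mu>. \<mu> \<in> {0<..\<mu>hat} \<Longrightarrow> (xmu \<mu>, lmu \<mu>) \<in> ball (xs, ls) \<delta>"
    and traj_eq: "\<And>\<mu>. \<mu> \<in> {0<..\<mu>hat} \<Longrightarrow> Fmu g \<mu> (xmu \<mu>) (lmu \<mu>) = 0"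
    and traj_bound: "\<And>\<mu>. \<mu> \<in> {0<..\<mu>hat} \<Longrightarrow> norm ((xmu \<mu>, lmu \<mu>) - (xs, ls)) \<le> C4 * \<mu>"
    and traj_lip: "\<exists>L. L-lipschitz_on {0<..\<mu>hat} (\<lambda>\<mu>. (xmu \<mu>, lmu \<mu>))"
    and \<sigma>: "0 < \<sigma>" "\<sigma> < 1"
  shows "(\<forall>\<mu>>0. \<forall>x l. (x, l) \<in> ball (xs, ls) \<delta> \<and> (\<forall>i. x$i > 0) \<and> (\<forall>i. l$i > 0) \<longrightarrow>
           (\<forall>dN. Fprime H x l dN = - Fmu g (\<sigma> * \<mu>) x l \<longrightarrow>
              (\<forall>i. (dxC (\<sigma> * \<mu>) x l)$i - (fst dN)$i = x$i / l$i * (snd dN)$i \<and>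
                   (dlC (\<sigma> * \<mu>) x l)$i - (snd dN)$i = l$i / x$i * (fst dN)$i)))
       \<and> (\<forall>C1>0. \<exists>\<rho>>0. \<exists>\<mu>bar. 0 < \<mu>bar \<and> \<mu>bar \<le> \<mu>hat \<and> (\<exists>C>0.
           \<forall>\<mu>. 0 < \<mu> \<and> \<mu> \<le> \<mu>bar \<longrightarrow>
           (\<forall>x l. (x, l) \<in> ball (xs, ls) \<delta> \<and> (\<forall>i. x$i > 0) \<and> (\<forall>i. l$i > 0)
              \<and> norm ((x, l) - (xmu \<mu>, lmu \<mu>)) < \<rho> \<and> norm (Fmu g \<mu> x l) \<le> C1 * \<mu> \<longrightarrow>
              (\<forall>dN. Fprime H x l dN = - Fmu g (\<sigma> * \<mu>) x l \<longrightarrow>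
                 (\<forall>i. xs$i = 0 \<longrightarrow> \<bar>(dxC (\<sigma> * \<mu>) x l)$i - (fst dN)$i\<bar> \<le> C * \<mu>^2) \<and>
                 (\<forall>i. xs$i > 0 \<longrightarrow> \<bar>(dlC (\<sigma> * \<mu>) x l)$i - (snd dN)$i\<bar> \<le> C * \<mu>^2)))))"
proof -
  define m where "m = Min (range (\<lambda>i. xs$i + ls$i))"
  have m: "0 < m" "\<And>i. m \<le> xs$i + ls$i"
    using strict unfolding m_def by (auto intro: Min_le simp: Min_gr_iff)
  show ?thesis
  proof (rule conjI)
    show "\<forall>\<mu>>0. \<forall>x l. (x, l) \<in> ball (xs, ls) \<delta> \<and> (\<forall>i. x$i > 0) \<and> (\<forall>i. l$i > 0) \<longrightarrow>
           (\<forall>dN. Fprime H x l dN = - Fmu g (\<sigma> * \<mu>) x l \<longrightarrow>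
              (\<forall>i. (dxC (\<sigma> * \<mu>) x l)$i - (fst dN)$i = x$i / l$i * (snd dN)$i \<and>
                   (dlC (\<sigma> * \<mu>) x l)$i - (snd dN)$i = l$i / x$i * (fst dN)$i))"
      by (simp add: newton_corrector_difference order_less_imp_not_eq2 del: split_paired_All)
  qed (intro allI impI, rule newton_corrector_estimate[OF m compl nonsing \<mu>hat_pos traj_bound \<sigma>])
qed

end
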